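(* Let $\Xi^\natural=\frac12\big(\sum_{i\in[p]}S^\natural_{ii}-\sum_{i\in p+[q]}S^\natural_{ii}\big)\in S^2(\mathfrak o_n)$ and $\Xi=\Phi^{-1}(\Xi^\natural)\in S^2(\mathfrak g)$. Then $$\gamma_2(\Xi)=\Omega_{\mathfrak o_p}-\Omega_{\mathfrak o_q}-\frac{p-q}{p+q}\Omega_{\mathfrak g}.$$
   Context: Let $n=p+q$, $I_{p,q}=\mathrm{diag}(1_p,-1_q)$, $\mathfrak g=\{X\in\mathfrak{gl}_n(\mathbb C):{}^tXI_{p,q}+I_{p,q}X=0\}$, $\mathfrak o_n=\{X\in\mathfrak{gl}_n(\mathbb C):{}^tX+X=0\}$. Write $[p]=\{1,\dots,p\}$, $p+[q]=\{p+1,\dots,n\}$, $\epsilon_i=1$ for $i\in[p]$ and $-1$ otherwise. Put $X_{i,j}=\epsilon_jE_{i,j}-\epsilon_iE_{j,i}\in\mathfrak g$ and $M_{i,j}=E_{i,j}-E_{j,i}\in\mathfrak o_n$. Set $X_{i,j}^\vee=-X_{i,j}$ if $i,j\in[p]$ or $i,j\in p+[q]$, and $X_{i,j}^\vee=X_{i,j}$ otherwise. $\Phi:\mathfrak g\to\mathfrak o_n$, $X\mapsto I_{p,q}^{1/2}XI_{p,q}^{-1/2}$ with $I_{p,q}^{1/2}=\mathrm{diag}(1,\dots,1,\sqrt{-1},\dots,\sqrt{-1})$, extended to tensors. $S^2$ is identified with symmetric 2-tensors; $\gamma_2:S^2(\mathfrak g)\to U(\mathfrak g)$ is the restriction of $a\otimes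 b\mapsto ab$. Define $Q^\natural=\sum_{i,k\in[n]}M_{i,k}\otimes M_{k,i}$ and $S^\natural_{ij}=\frac12\sum_{k\in[n]}(M_{i,k}\otimes M_{k,j}+M_{k,j}\otimes M_{i,k})-\frac1n\delta_{i,j}Q^\natural$. Casimir elements: $\Omega_{\mathfrak g}=\sum_{i<j}X_{i,j}X_{i,j}^\vee$, $\Omega_{\mathfrak o_p}=\sum_{i<j,\ i,j\in[p]}X_{i,j}X_{j,i}$, $\Omega_{\mathfrak o_q}=\sum_{i<j,\ i,j\in p+[q]}X_{i,j}X_{j,i}$. *)

theory Defs
  imports Complex_Main "HOL-Library.Function_Algebras"
begin

text \<open>Matrices: n x n complex matrices as functions nat => nat => complex, indices in {1..n},
  entries outside {1..n}x{1..n} being zero.  Addition/subtraction are pointwise (Function_Algebras);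
  the matrix product is the explicit mmul below (we never use the pointwise product on matrices).\<close>
type_synonym mat = "nat \<Rightarrow> nat \<Rightarrow> complex"

definition supp_mat :: "nat \<Rightarrow> mat \<Rightarrow> bool" where
  "supp_mat n X \<longleftrightarrow> (\<forall>i j. (i \<notin> {1..n} \<or> j \<notin> {1..n}) \<longrightarrow> X i j = 0)"

definition mmul :: "nat \<Rightarrow> mat \<Rightarrow> mat \<Rightarrow> mat" where
  "mmul n A B = (\<lambda>i j. \<Sum>k=1..n. A i k * B k j)"

definition mtransp :: "mat \<Rightarrow> mat" where
  "mtransp A = (\<lambda>i j. A j i)"

definition msc :: "complex \<Rightarrow> mat \<Rightarrow> mat" where
  "msc c A = (\<lambda>i j. c * A i j)"

definition bracket :: "nat \<Rightarrow> mat \<Rightarrow> mat \<Rightarrow> mat" where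
  "bracket n A B = mmul n A B - mmul n B A"

definition Emat :: "nat \<Rightarrow> nat \<Rightarrow> mat" where
  "Emat i j = (\<lambda>a b. if a = i \<and> b = j then 1 else 0)"

definition diagm :: "nat \<Rightarrow> (nat \<Rightarrow> complex) \<Rightarrow> mat" where
  "diagm n d = (\<lambda>a b. if a = b \<and> a \<in> {1..n} then d a else 0)"

definition eps :: "nat \<Rightarrow> nat \<Rightarrow> complex" where
  "eps p i = (if i \<le> p then 1 else -1)"

definition Ipq :: "nat \<Rightarrow> nat \<Rightarrow> mat" where
  "Ipq p q = diagm (p + q) (eps p)"

definition gpq :: "nat \<Rightarrow> nat \<Rightarrow> mat set" where
  "gpq p q = {X. supp_mat (p + q) X \<and>
      mmul (p + q) (mtransp X) (Ipq p q) + mmul (p + q) (Ipq p q) X = 0}"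

definition Xm :: "nat \<Rightarrow> nat \<Rightarrow> nat \<Rightarrow> mat" where
  "Xm p i j = msc (eps p j) (Emat i j) - msc (eps p i) (Emat j i)"

definition Xvee :: "nat \<Rightarrow> nat \<Rightarrow> nat \<Rightarrow> mat" where
  "Xvee p i j = (if (i \<le> p \<longleftrightarrow> j \<le> p) then - Xm p i j else Xm p i j)"

definition Mm :: "nat \<Rightarrow> nat \<Rightarrow> mat" where
  "Mm i j = Emat i j - Emat j i"

definition Ihalf :: "nat \<Rightarrow> nat \<Rightarrow> mat" where
  "Ihalf p q = diagm (p + q) (\<lambda>a. if a \<le> p then 1 else \<i>)"

definition Ihalf_inv :: "nat \<Rightarrow> nat \<Rightarrow> mat" where
  "Ihalf_inv p q = diagm (p + q) (\<lambda>a. if a \<le> p then 1 else - \<i>)"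

definition Phi :: "nat \<Rightarrow> nat \<Rightarrow> mat \<Rightarrow> mat" where
  "Phi p q X = mmul (p + q) (mmul (p + q) (Ihalf p q) X) (Ihalf_inv p q)"

text \<open>Free associative unital algebra on the letters (matrices): elements are formal linear
  combinations of words, i.e. functions mat list => complex (addition pointwise).  Tensors
  a (x) b are represented as the word [a,b]; the tensor algebra T(V) and U(g) are obtained by
  quotienting (see uideal).\<close>
type_synonym fa = "mat list \<Rightarrow> complex"

definition wd :: "mat list \<Rightarrow> fa" where
  "wd u = (\<lambda>w. if w = u then 1 else 0)"

definition gen :: "mat \<Rightarrow> fa" where
  "gen x = wd [x]"

definition fscale :: "complex \<Rightarrow> fa \<Rightarrow> fa" where
  "fscale c f = (\<lambda>w. c * f w)"

definition fmul :: "fa \<Rightarrow> fa \<Rightarrow> fa" where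
  "fmul f g = (\<lambda>w. \<Sum>k\<le>length w. f (take k w) * g (drop k w))"

definition tens :: "mat \<Rightarrow> mat \<Rightarrow> fa" where
  "tens a b = fmul (gen a) (gen b)"

text \<open>Extension of Phi^{-1} to tensors (pushforward of the formal combination along the letterwise
  map Phi^{-1}, i.e. pullback along Phi, restricted to letters supported in [n]x[n], where Phi is
  bijective).\<close>
definition Phi_inv_t :: "nat \<Rightarrow> nat \<Rightarrow> fa \<Rightarrow> fa" where
  "Phi_inv_t p q t = (\<lambda>w. if (\<forall>x\<in>set w. supp_mat (p + q) x) then t (map (Phi p q) w) else 0)"

text \<open>Two-sided ideal of the free algebra on the set G whose quotient is U(g):
  linearity of the generators and x y - y x = [x,y].\<close>
inductive_set uideal :: "nat \<Rightarrow> mat set \<Rightarrow> fa set" for n :: nat and G :: "mat set" where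
  zero: "0 \<in> uideal n G"
| add: "a \<in> uideal n G \<Longrightarrow> b \<in> uideal n G \<Longrightarrow> a + b \<in> uideal n G"
| scale: "a \<in> uideal n G \<Longrightarrow> fscale c a \<in> uideal n G"
| lin_add: "u \<in> lists G \<Longrightarrow> v \<in> lists G \<Longrightarrow> x \<in> G \<Longrightarrow> y \<in> G \<Longrightarrow>
     wd (u @ [x + y] @ v) - wd (u @ [x] @ v) - wd (u @ [y] @ v) \<in> uideal n G"
| lin_sc: "u \<in> lists G \<Longrightarrow> v \<in> lists G \<Longrightarrow> x \<in> G \<Longrightarrow>
     wd (u @ [msc c x] @ v) - fscale c (wd (u @ [x] @ v)) \<in> uideal n G"
| comm: "u \<in> lists G \<Longrightarrow> v \<in> lists G \<Longrightarrow> x \<in> G \<Longrightarrow> y \<in> G \<Longrightarrow>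
     wd (u @ [x, y] @ v) - wd (u @ [y, x] @ v) - wd (u @ [bracket n x y] @ v) \<in> uideal n G"

definition ueq :: "nat \<Rightarrow> nat \<Rightarrow> fa \<Rightarrow> fa \<Rightarrow> bool" where
  "ueq p q A B \<longleftrightarrow> A - B \<in> uideal (p + q) (gpq p q)"

text \<open>gamma_2 : S^2(g) -> U(g), a (x) b |-> ab.  With tensors represented in the free algebra,
  a (x) b = [a][b] already, so gamma_2 is the identity on representatives (the quotient map
  to U(g) is taken by ueq).\<close>
definition gamma2 :: "fa \<Rightarrow> fa" where
  "gamma2 t = t"

definition Qnat :: "nat \<Rightarrow> fa" where
  "Qnat n = (\<Sum>i\<in>{1..n}. \<Sum>k\<in>{1..n}. tens (Mm i k) (Mm k i))"

definition Snat :: "nat \<Rightarrow> nat \<Rightarrow> nat \<Rightarrow> fa" where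
  "Snat n i j = fscale (1/2) (\<Sum>k\<in>{1..n}. tens (Mm i k) (Mm k j) + tens (Mm k j) (Mm i k))
      - fscale ((1 / of_nat n) * (if i = j then 1 else 0)) (Qnat n)"

definition Xi_nat :: "nat \<Rightarrow> nat \<Rightarrow> fa" where
  "Xi_nat p q = fscale (1/2) ((\<Sum>i\<in>{1..p}. Snat (p + q) i i) - (\<Sum>i\<in>{p+1..p+q}. Snat (p + q) i i))"

definition Xi :: "nat \<Rightarrow> nat \<Rightarrow> fa" where
  "Xi p q = Phi_inv_t p q (Xi_nat p q)"

definition Omega_g :: "nat \<Rightarrow> nat \<Rightarrow> fa" where
  "Omega_g p q = (\<Sum>(i,j)\<in>{(i,j). 1 \<le> i \<and> i < j \<and> j \<le> p + q}.
      fmul (gen (Xm p i j)) (gen (Xvee p i j)))"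

definition Omega_op :: "nat \<Rightarrow> fa" where
  "Omega_op p = (\<Sum>(i,j)\<in>{(i,j). 1 \<le> i \<and> i < j \<and> j \<le> p}.
      fmul (gen (Xm p i j)) (gen (Xm p j i)))"

definition Omega_oq :: "nat \<Rightarrow> nat \<Rightarrow> fa" where
  "Omega_oq p q = (\<Sum>(i,j)\<in>{(i,j). p + 1 \<le> i \<and> i < j \<and> j \<le> p + q}.
      fmul (gen (Xm p i j)) (gen (Xm p j i)))"

end

theory Submission
  imports Defs
begin

text \<open>\<Phi> sends X_ik to \<rho>_ik M_ik and X_ik^\<or> to cnj(\<rho>_ik) M_ki, where \<rho>_ik
  (\<open>phi_coeff\<close>) is \<plusminus>1 within a block and \<i> across the blocks; as |\<rho>_ik| = 1,
  bilinearity gives \<Phi>^-1(M_ik \<otimes> M_ki) = X_ik X_ik^\<or> in U(\<gg>). Unfolding the definitions,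
  \<Xi>^\<natural> = \<Sum>_a,b \<kappa>_ab M_ab \<otimes> M_ba with \<kappa>_ab = ((\<epsilon>_a + \<epsilon>_b)/2 - (p-q)/(p+q))/2
  (\<open>xi_coeff\<close>). The terms (a,b) and (b,a) have the same image, the diagonal terms vanish, and
  for a < b the coefficient 2\<kappa>_ab is 1, -1 or 0 (both indices in [p], both in p+[q], or one in
  each) minus (p-q)/(p+q): exactly the coefficients of \<Omega>_\<oo>p - \<Omega>_\<oo>q - (p-q)/(p+q) \<Omega>_\<gg>.
  Only the linearity relations of U(\<gg>) are needed, never the commutator relations.\<close>

section \<open>The map \<open>\<Phi>\<close> on the standard basis of \<open>\<oo>(p,q)\<close>\<close>

lemma msc_apply [simp]: "msc c X a b = c * X a b"
  by (simp add: msc_def)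

lemma msc_zero: "msc c 0 = 0"
  by (intro ext) simp

lemma mmul_diagm_left: "mmul n (diagm n d) X = (\<lambda>a b. if a \<in> {1..n} then d a * X a b else 0)"
proof (intro ext)
  fix a b
  have "(\<Sum>k=1..n. diagm n d a k * X k b) = (\<Sum>k=1..n. if k = a then d a * X a b else 0)"
    by (rule sum.cong) (auto simp: diagm_def)
  then show "mmul n (diagm n d) X a b = (if a \<in> {1..n} then d a * X a b else 0)"
    by (simp add: mmul_def)
qed

lemma mmul_diagm_right: "mmul n X (diagm n d) = (\<lambda>a b. if b \<in> {1..n} then X a b * d b else 0)"
proof (intro ext)
  fix a b
  have "(\<Sum>k=1..n. X a k * diagm n d k b) = (\<Sum>k=1..n. if k = b then X a b * d b else 0)"
    by (rule sum.cong) (auto simp: diagm_def)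
  then show "mmul n X (diagm n d) a b = (if b \<in> {1..n} then X a b * d b else 0)"
    by (simp add: mmul_def)
qed

lemma Phi_apply: "Phi p q X a b = (if a \<in> {1..p+q} \<and> b \<in> {1..p+q} then
   (if a \<le> p then 1 else \<i>) * X a b * (if b \<le> p then 1 else - \<i>) else 0)"
  unfolding Phi_def Ihalf_def Ihalf_inv_def mmul_diagm_left mmul_diagm_right by auto

lemma Phi_zero: "Phi p q 0 = 0"
  by (intro ext) (simp add: Phi_apply)

lemma inj_on_Phi: "inj_on (Phi p q) {X. supp_mat (p+q) X}"
proof (rule inj_onI, intro ext)
  fix X Y a b
  assume supp: "X \<in> {X. supp_mat (p+q) X}" "Y \<in> {X. supp_mat (p+q) X}"
    and eq: "Phi p q X = Phi p q Y"
  show "X a b = Y a b"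
  proof (cases "a \<in> {1..p+q} \<and> b \<in> {1..p+q}")
    case True
    have "Phi p q X a b = Phi p q Y a b"
      using eq by simp
    with True show ?thesis
      by (simp add: Phi_apply split: if_splits)
  next
    case False
    with supp show ?thesis
      by (auto simp: supp_mat_def)
  qed
qed

lemma gpq_iff: "X \<in> gpq p q \<longleftrightarrow> supp_mat (p+q) X \<and>
   (\<forall>a\<in>{1..p+q}. \<forall>b\<in>{1..p+q}. X b a * eps p b + eps p a * X a b = 0)"
proof (cases "supp_mat (p+q) X")
  case True
  then have "mmul (p+q) (mtransp X) (Ipq p q) + mmul (p+q) (Ipq p q) X
     = (\<lambda>a b. if a \<in> {1..p+q} \<and> b \<in> {1..p+q} then X b a * eps p b + eps p a * X a b else 0)"
    unfolding Ipq_def mmul_diagm_left mmul_diagm_right mtransp_def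
    by (intro ext) (auto simp: supp_mat_def)
  with True show ?thesis
    unfolding gpq_def by (auto simp: fun_eq_iff)
next
  case False
  then show ?thesis
    unfolding gpq_def by auto
qed

lemma msc_in_gpq:
  assumes "X \<in> gpq p q"
  shows "msc c X \<in> gpq p q"
proof -
  have "msc c X b a * eps p b + eps p a * msc c X a b = c * (X b a * eps p b + eps p a * X a b)" for a b
    by (simp add: algebra_simps)
  with assms show ?thesis
    unfolding gpq_iff supp_mat_def by auto
qed

lemma Xm_apply: "Xm p i k a b =
    (if a = i \<and> b = k then eps p k else 0) - (if a = k \<and> b = i then eps p i else 0)"
  unfolding Xm_def fun_diff_def msc_apply Emat_def
  by (simp only: mult_1_right mult_zero_right
      if_distrib[of "\<lambda>x. eps p k * x"] if_distrib[of "\<lambda>x. eps p i * x"])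

lemma Mm_apply: "Mm i k a b = (if a = i \<and> b = k then 1 else 0) - (if a = k \<and> b = i then 1 else 0)"
  unfolding Mm_def Emat_def fun_diff_def by (rule refl)

lemma Xm_diag: "Xm p i i = 0"
  by (intro ext) (simp add: Xm_apply)

lemma Mm_diag: "Mm i i = 0"
  by (intro ext) (simp add: Mm_apply)

lemma Xm_swap: "Xm p k i = msc (-1) (Xm p i k)"
  by (intro ext) (simp add: Xm_apply split del: if_split)

lemma Xvee_swap: "Xvee p k i = msc (-1) (Xvee p i k)"
  by (auto simp: Xvee_def Xm_swap[of p k i] fun_eq_iff)

lemma Xvee_same_block: "(a \<le> p \<longleftrightarrow> b \<le> p) \<Longrightarrow> Xvee p a b = Xm p b a"
  by (simp add: Xvee_def Xm_swap[of p b a] fun_eq_iff)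

lemma Xm_in_gpq:
  assumes "i \<in> {1..p+q}" "k \<in> {1..p+q}"
  shows "Xm p i k \<in> gpq p q"
proof -
  have "supp_mat (p+q) (Xm p i k)"
    using assms unfolding supp_mat_def Xm_apply by auto
  moreover have "Xm p i k b a * eps p b + eps p a * Xm p i k a b = 0" for a b
  proof (cases "i = k")
    case True
    then show ?thesis by (simp add: Xm_diag)
  next
    case False
    then show ?thesis by (auto simp: Xm_apply)
  qed
  ultimately show ?thesis
    unfolding gpq_iff by blast
qed

lemma Xvee_in_gpq:
  assumes "i \<in> {1..p+q}" "k \<in> {1..p+q}"
  shows "Xvee p i k \<in> gpq p q"
proof -
  have "- Xm p i k = msc (-1) (Xm p i k)"
    by (simp add: fun_eq_iff)
  with assms show ?thesis
    by (simp add: Xvee_def Xm_in_gpq msc_in_gpq)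
qed

definition phi_coeff :: "nat \<Rightarrow> nat \<Rightarrow> nat \<Rightarrow> complex" where
  "phi_coeff p i k = (if i \<le> p \<longleftrightarrow> k \<le> p then eps p i else \<i>)"

lemma phi_coeff_cnj: "cnj (phi_coeff p i k) * phi_coeff p i k = 1"
  by (simp add: phi_coeff_def eps_def)

lemma Phi_Xm:
  assumes "i \<in> {1..p+q}" "k \<in> {1..p+q}"
  shows "Phi p q (msc (cnj (phi_coeff p i k)) (Xm p i k)) = Mm i k"
proof (cases "i = k")
  case True
  then show ?thesis by (simp add: Xm_diag Mm_diag msc_zero Phi_zero)
next
  case False
  with assms show ?thesis
    by (intro ext) (auto simp: Phi_apply Xm_apply Mm_apply phi_coeff_def eps_def)
qed

lemma Phi_Xvee:
  assumes "i \<in> {1..p+q}" "k \<in> {1..p+q}"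
  shows "Phi p q (msc (phi_coeff p i k) (Xvee p i k)) = Mm k i"
proof (cases "i = k")
  case True
  then show ?thesis by (simp add: Xvee_def Xm_diag Mm_diag msc_zero Phi_zero)
next
  case False
  with assms show ?thesis
    by (intro ext) (auto simp: Phi_apply Xvee_def Xm_apply Mm_apply phi_coeff_def eps_def)
qed

section \<open>Words, \<open>\<Phi>\<^sup>-\<^sup>1\<close> on tensors, and the ideal defining \<open>U(\<gg>)\<close>\<close>

lemma fscale_apply [simp]: "fscale c f w = c * f w"
  by (simp add: fscale_def)

lemma fscale_one [simp]: "fscale 1 f = f"
  by (simp add: fscale_def)

lemma fscale_zero [simp]: "fscale 0 f = 0"
  by (simp add: fscale_def fun_eq_iff)

lemma sum_fun_apply: "(\<Sum>i\<in>A. f i) w = (\<Sum>i\<in>A. f i w)"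
  by (induction A rule: infinite_finite_induct) auto

lemma fscale_sum: "fscale c (\<Sum>i\<in>A. f i) = (\<Sum>i\<in>A. fscale c (f i))"
  by (simp add: fun_eq_iff sum_fun_apply sum_distrib_left)

lemma take_drop_eq_iff:
  "k \<le> length w \<Longrightarrow> take k w = u \<and> drop k w = v \<longleftrightarrow> k = length u \<and> w = u @ v"
  by (metis append_eq_conv_conj length_take min.absorb2)

lemma fmul_wd: "fmul (wd u) (wd v) = wd (u @ v)"
proof (intro ext)
  fix w
  have "wd u (take k w) * wd v (drop k w) = (if k = length u then wd (u @ v) w else 0)"
    if "k \<le> length w" for k
  proof -
    have "wd u (take k w) * wd v (drop k w) = (if take k w = u \<and> drop k w = v then 1 else 0)"
      by (simp add: wd_def)
    with take_drop_eq_iff[OF that] show ?thesis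
      by (simp add: wd_def)
  qed
  then have "fmul (wd u) (wd v) w = (\<Sum>k\<le>length w. if k = length u then wd (u @ v) w else 0)"
    unfolding fmul_def by (intro sum.cong) auto
  also have "\<dots> = wd (u @ v) w"
    by (auto simp: wd_def)
  finally show "fmul (wd u) (wd v) w = wd (u @ v) w" .
qed

lemma fmul_gen_gen: "fmul (gen a) (gen b) = wd [a, b]"
  by (simp add: gen_def fmul_wd)

lemma Phi_inv_t_fscale: "Phi_inv_t p q (fscale c f) = fscale c (Phi_inv_t p q f)"
  by (intro ext) (simp add: Phi_inv_t_def)

lemma Phi_inv_t_sum: "Phi_inv_t p q (\<Sum>i\<in>A. f i) = (\<Sum>i\<in>A. Phi_inv_t p q (f i))"
proof (intro ext)
  fix w
  show "Phi_inv_t p q (\<Sum>i\<in>A. f i) w = (\<Sum>i\<in>A. Phi_inv_t p q (f i)) w"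
    by (cases "\<forall>x\<in>set w. supp_mat (p+q) x")
       (auto simp: Phi_inv_t_def sum_fun_apply intro!: sum.neutral)
qed

lemma Phi_inv_t_wd:
  assumes "\<forall>x\<in>set u. supp_mat (p+q) x"
  shows "Phi_inv_t p q (wd (map (Phi p q) u)) = wd u"
proof (intro ext)
  fix w
  show "Phi_inv_t p q (wd (map (Phi p q) u)) w = wd u w"
  proof (cases "\<forall>x\<in>set w. supp_mat (p+q) x")
    case True
    with assms have "map (Phi p q) w = map (Phi p q) u \<longleftrightarrow> w = u"
      by (intro inj_on_map_eq_map inj_on_subset[OF inj_on_Phi]) auto
    with True show ?thesis
      by (simp add: Phi_inv_t_def wd_def)
  next
    case False
    with assms show ?thesis
      by (auto simp: Phi_inv_t_def wd_def)
  qed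
qed

lemma uideal_sum: "(\<And>i. i \<in> A \<Longrightarrow> f i \<in> uideal n G) \<Longrightarrow> (\<Sum>i\<in>A. f i) \<in> uideal n G"
  by (induction A rule: infinite_finite_induct) (auto intro: uideal.intros)

lemma wd_msc_pair_congruent:
  assumes "x \<in> G" "y \<in> G" "msc d y \<in> G"
  shows "wd [msc c x, msc d y] - fscale (c * d) (wd [x, y]) \<in> uideal n G"
proof -
  have "wd ([] @ [msc c x] @ [msc d y]) - fscale c (wd ([] @ [x] @ [msc d y])) \<in> uideal n G"
    using assms by (intro uideal.lin_sc) auto
  moreover have "fscale c (wd ([x] @ [msc d y] @ []) - fscale d (wd ([x] @ [y] @ []))) \<in> uideal n G"
    using assms by (intro uideal.scale uideal.lin_sc) auto
  moreover have "wd [msc c x, msc d y] - fscale (c * d) (wd [x, y]) =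
      (wd ([] @ [msc c x] @ [msc d y]) - fscale c (wd ([] @ [x] @ [msc d y])))
      + fscale c (wd ([x] @ [msc d y] @ []) - fscale d (wd ([x] @ [y] @ [])))"
    by (simp add: fun_eq_iff algebra_simps)
  ultimately show ?thesis
    by (metis uideal.add)
qed

lemma tens_Mm_congruent:
  assumes "a \<in> {1..p+q}" "b \<in> {1..p+q}"
  shows "Phi_inv_t p q (tens (Mm a b) (Mm b a)) - wd [Xm p a b, Xvee p a b] \<in> uideal (p+q) (gpq p q)"
proof -
  define x where "x = msc (cnj (phi_coeff p a b)) (Xm p a b)"
  define y where "y = msc (phi_coeff p a b) (Xvee p a b)"
  have "x \<in> gpq p q" "y \<in> gpq p q"
    unfolding x_def y_def using assms by (simp_all add: msc_in_gpq Xm_in_gpq Xvee_in_gpq)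
  then have "Phi_inv_t p q (wd (map (Phi p q) [x, y])) = wd [x, y]"
    by (intro Phi_inv_t_wd) (simp add: gpq_iff)
  then have "Phi_inv_t p q (tens (Mm a b) (Mm b a)) = wd [x, y]"
    using assms by (simp add: tens_def fmul_gen_gen x_def y_def Phi_Xm Phi_Xvee)
  moreover have "wd [x, y] - wd [Xm p a b, Xvee p a b] \<in> uideal (p+q) (gpq p q)"
    using wd_msc_pair_congruent[of "Xm p a b" "gpq p q" "Xvee p a b" "phi_coeff p a b"
        "cnj (phi_coeff p a b)"] assms
    by (simp add: x_def y_def phi_coeff_cnj msc_in_gpq Xm_in_gpq Xvee_in_gpq)
  ultimately show ?thesis
    by simp
qed

lemma wd_Xm_Xvee_swap_congruent:
  assumes "a \<in> {1..p+q}" "b \<in> {1..p+q}"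
  shows "wd [Xm p b a, Xvee p b a] - wd [Xm p a b, Xvee p a b] \<in> uideal (p+q) (gpq p q)"
  using wd_msc_pair_congruent[of "Xm p a b" "gpq p q" "Xvee p a b" "-1" "-1"] assms
  by (simp add: Xm_swap[of p b a] Xvee_swap[of p b a] msc_in_gpq Xm_in_gpq Xvee_in_gpq)

lemma wd_Xm_Xvee_diag_in_uideal:
  assumes "a \<in> {1..p+q}"
  shows "wd [Xm p a a, Xvee p a a] \<in> uideal (p+q) (gpq p q)"
proof -
  have "msc 0 (Xm p a a) = Xm p a a" "msc 0 (Xvee p a a) = Xvee p a a"
    by (simp_all add: Xvee_def Xm_diag fun_eq_iff)
  with wd_msc_pair_congruent[of "Xm p a a" "gpq p q" "Xvee p a a" 0 0] assms show ?thesis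
    by (simp add: msc_in_gpq Xm_in_gpq Xvee_in_gpq)
qed

lemma tens_Mm_sym_congruent:
  assumes "a \<in> {1..p+q}" "b \<in> {1..p+q}"
  shows "fscale c (Phi_inv_t p q (tens (Mm a b) (Mm b a)))
      + fscale c (Phi_inv_t p q (tens (Mm b a) (Mm a b)))
      - fscale (2 * c) (wd [Xm p a b, Xvee p a b]) \<in> uideal (p+q) (gpq p q)"
proof -
  define T where "T a b = Phi_inv_t p q (tens (Mm a b) (Mm b a))" for a b
  define Y where "Y a b = wd [Xm p a b, Xvee p a b]" for a b
  have "fscale c (T a b) + fscale c (T b a) - fscale (2 * c) (Y a b)
      = fscale c ((T a b - Y a b) + (T b a - Y b a) + (Y b a - Y a b))"
    by (simp add: fun_eq_iff algebra_simps)
  moreover have "(T a b - Y a b) + (T b a - Y b a) + (Y b a - Y a b) \<in> uideal (p+q) (gpq p q)"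
    unfolding T_def Y_def using assms
    by (intro uideal.add tens_Mm_congruent wd_Xm_Xvee_swap_congruent)
  ultimately show ?thesis
    unfolding T_def Y_def by (metis uideal.scale)
qed

lemma tens_Mm_diag_in_uideal:
  assumes "a \<in> {1..p+q}"
  shows "Phi_inv_t p q (tens (Mm a a) (Mm a a)) \<in> uideal (p+q) (gpq p q)"
  using uideal.add[OF tens_Mm_congruent[OF assms assms] wd_Xm_Xvee_diag_in_uideal[OF assms]]
  by simp

section \<open>The coefficients of \<open>\<Xi>\<close> and of the Casimir combination\<close>

definition xi_coeff :: "nat \<Rightarrow> nat \<Rightarrow> nat \<Rightarrow> nat \<Rightarrow> complex" where
  "xi_coeff p q a b = ((eps p a + eps p b) / 2 - (of_nat p - of_nat q) / (of_nat p + of_nat q)) / 2"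

lemma xi_coeff_commute: "xi_coeff p q b a = xi_coeff p q a b"
  by (simp add: xi_coeff_def add.commute)

lemma xi_coeff_upper:
  assumes "a < b"
  shows "2 * xi_coeff p q a b
    = (if b \<le> p then 1 else 0) - (if p < a then 1 else 0) - (of_nat p - of_nat q) / (of_nat p + of_nat q)"
  using assms by (auto simp: xi_coeff_def eps_def right_diff_distrib)

lemma sum_eps_mult:
  "(\<Sum>i\<in>{1..p+q}. eps p i * g i) = (\<Sum>i\<in>{1..p}. g i) - (\<Sum>i\<in>{p+1..p+q}. g i)"
proof -
  have "{1..p+q} = {1..p} \<union> {p+1..p+q}"
    by auto
  then have "(\<Sum>i\<in>{1..p+q}. eps p i * g i)
      = (\<Sum>i\<in>{1..p}. eps p i * g i) + (\<Sum>i\<in>{p+1..p+q}. eps p i * g i)"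
    by (simp add: sum.union_disjoint)
  also have "\<dots> = (\<Sum>i\<in>{1..p}. g i) + (\<Sum>i\<in>{p+1..p+q}. - g i)"
    by (intro arg_cong2[where f = "(+)"] sum.cong) (auto simp: eps_def)
  finally show ?thesis
    by (simp add: sum_negf)
qed

lemma sum_symmetrised_weights:
  fixes e :: "'a \<Rightarrow> 'b::comm_semiring_0"
  shows "(\<Sum>i\<in>A. e i * (\<Sum>k\<in>A. f i k + f k i)) = (\<Sum>a\<in>A. \<Sum>b\<in>A. (e a + e b) * f a b)"
proof -
  have "(\<Sum>i\<in>A. e i * (\<Sum>k\<in>A. f i k + f k i))
      = (\<Sum>i\<in>A. \<Sum>k\<in>A. e i * f i k) + (\<Sum>i\<in>A. \<Sum>k\<in>A. e i * f k i)"
    by (simp add: sum_distrib_left distrib_left sum.distrib)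
  also have "(\<Sum>i\<in>A. \<Sum>k\<in>A. e i * f k i) = (\<Sum>a\<in>A. \<Sum>b\<in>A. e b * f a b)"
    by (rule sum.swap)
  finally show ?thesis
    by (simp add: distrib_right sum.distrib)
qed

lemma Xi_nat_coefficients:
  fixes f :: "nat \<Rightarrow> nat \<Rightarrow> complex" and p q :: nat
  defines "N \<equiv> {1..p+q}"
  defines "S i \<equiv> (1/2) * (\<Sum>k\<in>N. f i k + f k i) - (1 / of_nat (p+q)) * (\<Sum>a\<in>N. \<Sum>b\<in>N. f a b)"
  shows "(1/2) * ((\<Sum>i\<in>{1..p}. S i) - (\<Sum>i\<in>{p+1..p+q}. S i))
      = (\<Sum>a\<in>N. \<Sum>b\<in>N. xi_coeff p q a b * f a b)"
proof -
  define C where "C = (\<Sum>a\<in>N. \<Sum>b\<in>N. f a b)"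
  define W where "W = (\<Sum>a\<in>N. \<Sum>b\<in>N. (eps p a + eps p b) / 2 * f a b)"
  have trace: "(\<Sum>i\<in>N. eps p i) = of_nat p - of_nat q"
    using sum_eps_mult[where g = "\<lambda>_. 1"] by (simp add: N_def)
  have S_eq: "S i = (1/2) * (\<Sum>k\<in>N. f i k + f k i) - C / of_nat (p+q)" for i
    by (simp add: S_def C_def)
  have "(1/2) * ((\<Sum>i\<in>{1..p}. S i) - (\<Sum>i\<in>{p+1..p+q}. S i)) = (1/2) * (\<Sum>i\<in>N. eps p i * S i)"
    unfolding N_def sum_eps_mult ..
  also have "(\<Sum>i\<in>N. eps p i * S i)
      = (1/2) * (\<Sum>i\<in>N. eps p i * (\<Sum>k\<in>N. f i k + f k i)) - (\<Sum>i\<in>N. eps p i) * (C / of_nat (p+q))"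
    unfolding S_eq right_diff_distrib sum_subtractf sum_distrib_left sum_distrib_right
    by (simp add: mult.left_commute)
  also have "\<dots> = W - (of_nat p - of_nat q) / (of_nat p + of_nat q) * C"
    unfolding sum_symmetrised_weights trace W_def by (simp add: sum_distrib_left)
  also have "(1/2) * \<dots> = (\<Sum>a\<in>N. \<Sum>b\<in>N.
      (1/2) * ((eps p a + eps p b) / 2 * f a b - (of_nat p - of_nat q) / (of_nat p + of_nat q) * f a b))"
    by (simp only: W_def C_def sum_distrib_left sum_subtractf right_diff_distrib)
  also have "\<dots> = (\<Sum>a\<in>N. \<Sum>b\<in>N. xi_coeff p q a b * f a b)"
    by (simp add: xi_coeff_def left_diff_distrib)
  finally show ?thesis .
qed

lemma Xi_nat_expansion:
  "Xi_nat p q = (\<Sum>a\<in>{1..p+q}. \<Sum>b\<in>{1..p+q}.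
      fscale (xi_coeff p q a b) (tens (Mm a b) (Mm b a)))"
proof (intro ext)
  fix w
  show "Xi_nat p q w = (\<Sum>a\<in>{1..p+q}. \<Sum>b\<in>{1..p+q}.
      fscale (xi_coeff p q a b) (tens (Mm a b) (Mm b a))) w"
    using Xi_nat_coefficients[of "\<lambda>a b. tens (Mm a b) (Mm b a) w" p q]
    by (simp add: Xi_nat_def Snat_def Qnat_def sum_fun_apply)
qed

lemma Xi_expansion:
  "Xi p q = (\<Sum>a\<in>{1..p+q}. \<Sum>b\<in>{1..p+q}.
      fscale (xi_coeff p q a b) (Phi_inv_t p q (tens (Mm a b) (Mm b a))))"
  by (simp add: Xi_def Xi_nat_expansion Phi_inv_t_sum Phi_inv_t_fscale)

definition upper_pairs :: "'a::linorder set \<Rightarrow> ('a \<times> 'a) set" where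
  "upper_pairs A = {(a, b). a \<in> A \<and> b \<in> A \<and> a < b}"

lemma finite_upper_pairs: "finite A \<Longrightarrow> finite (upper_pairs A)"
  unfolding upper_pairs_def by (rule finite_subset[of _ "A \<times> A"]) auto

lemma sum_square_split:
  fixes g :: "'a::linorder \<Rightarrow> 'a \<Rightarrow> 'b::comm_monoid_add"
  assumes "finite A"
  shows "(\<Sum>a\<in>A. \<Sum>b\<in>A. g a b) = (\<Sum>(a, b)\<in>upper_pairs A. g a b + g b a) + (\<Sum>a\<in>A. g a a)"
proof -
  define L where "L = upper_pairs A"
  have "A \<times> A = L \<union> (prod.swap ` L \<union> (\<lambda>a. (a, a)) ` A)"
    by (auto simp: L_def upper_pairs_def image_iff)
  moreover have "L \<inter> (prod.swap ` L \<union> (\<lambda>a. (a, a)) ` A) = {}" "prod.swap ` L \<inter> (\<lambda>a. (a, a)) ` A = {}"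
    by (auto simp: L_def upper_pairs_def)
  ultimately have "(\<Sum>a\<in>A. \<Sum>b\<in>A. g a b) = (\<Sum>(a, b)\<in>L. g a b)
      + ((\<Sum>(a, b)\<in>prod.swap ` L. g a b) + (\<Sum>(a, b)\<in>(\<lambda>a. (a, a)) ` A. g a b))"
    using assms finite_upper_pairs[OF assms]
    by (simp add: L_def sum.cartesian_product sum.union_disjoint)
  also have "(\<Sum>(a, b)\<in>prod.swap ` L. g a b) = (\<Sum>(a, b)\<in>L. g b a)"
    by (simp add: sum.reindex)
  also have "(\<Sum>(a, b)\<in>(\<lambda>a. (a, a)) ` A. g a b) = (\<Sum>a\<in>A. g a a)"
    by (simp add: sum.reindex inj_on_def)
  finally show ?thesis
    by (simp add: L_def sum.distrib split_def add.assoc)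
qed

lemma Omega_g_eq_sum: "Omega_g p q = (\<Sum>(a, b)\<in>upper_pairs {1..p+q}. wd [Xm p a b, Xvee p a b])"
proof -
  have "{(i, j). 1 \<le> i \<and> i < j \<and> j \<le> p + q} = upper_pairs {1..p+q}"
    by (auto simp: upper_pairs_def)
  then show ?thesis
    by (simp add: Omega_g_def fmul_gen_gen)
qed

lemma Omega_op_eq_sum: "Omega_op p
    = (\<Sum>(a, b)\<in>upper_pairs {1..p+q}. if b \<le> p then wd [Xm p a b, Xvee p a b] else 0)"
proof -
  have "{(i, j). 1 \<le> i \<and> i < j \<and> j \<le> p} = {x \<in> upper_pairs {1..p+q}. snd x \<le> p}"
    by (auto simp: upper_pairs_def)
  moreover have "Xm p b a = Xvee p a b" if "a < b" "b \<le> p" for a b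
    using that by (simp add: Xvee_same_block)
  ultimately have "Omega_op p
      = (\<Sum>(a, b)\<in>{x \<in> upper_pairs {1..p+q}. snd x \<le> p}. wd [Xm p a b, Xvee p a b])"
    unfolding Omega_op_def fmul_gen_gen by (intro sum.cong) (auto simp: upper_pairs_def)
  then show ?thesis
    by (simp add: sum.inter_filter finite_upper_pairs split_def)
qed

lemma Omega_oq_eq_sum: "Omega_oq p q
    = (\<Sum>(a, b)\<in>upper_pairs {1..p+q}. if p < a then wd [Xm p a b, Xvee p a b] else 0)"
proof -
  have "{(i, j). p + 1 \<le> i \<and> i < j \<and> j \<le> p + q} = {x \<in> upper_pairs {1..p+q}. p < fst x}"
    by (auto simp: upper_pairs_def)
  moreover have "Xm p b a = Xvee p a b" if "p < a" "a < b" for a b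
    using that by (simp add: Xvee_same_block)
  ultimately have "Omega_oq p q
      = (\<Sum>(a, b)\<in>{x \<in> upper_pairs {1..p+q}. p < fst x}. wd [Xm p a b, Xvee p a b])"
    unfolding Omega_oq_def fmul_gen_gen by (intro sum.cong) (auto simp: upper_pairs_def)
  then show ?thesis
    by (simp add: sum.inter_filter finite_upper_pairs split_def)
qed

lemma Omega_combination:
  "Omega_op p - Omega_oq p q - fscale ((of_nat p - of_nat q) / (of_nat p + of_nat q)) (Omega_g p q)
    = (\<Sum>(a, b)\<in>upper_pairs {1..p+q}. fscale (2 * xi_coeff p q a b) (wd [Xm p a b, Xvee p a b]))"
proof -
  define Y where "Y a b = wd [Xm p a b, Xvee p a b]" for a b
  define c :: complex where "c = (of_nat p - of_nat q) / (of_nat p + of_nat q)"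
  have "Omega_op p - Omega_oq p q - fscale c (Omega_g p q) = (\<Sum>(a, b)\<in>upper_pairs {1..p+q}.
      (if b \<le> p then Y a b else 0) - (if p < a then Y a b else 0) - fscale c (Y a b))"
    unfolding Omega_op_eq_sum[of p q] Omega_oq_eq_sum Omega_g_eq_sum Y_def
    by (simp add: fscale_sum sum_subtractf split_def)
  also have "\<dots> = (\<Sum>(a, b)\<in>upper_pairs {1..p+q}. fscale (2 * xi_coeff p q a b) (Y a b))"
    by (intro sum.cong refl) (auto simp: upper_pairs_def xi_coeff_upper c_def fun_eq_iff left_diff_distrib)
  finally show ?thesis
    unfolding Y_def c_def .
qed

theorem lemma3p3:
  fixes p q :: nat
  shows "ueq p q (gamma2 (Xi p q))
     (Omega_op p - Omega_oq p q
      - fscale ((of_nat p - of_nat q) / (of_nat p + of_nat q)) (Omega_g p q))"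
proof -
  define N where "N = {1..p+q}"
  define T where "T a b = Phi_inv_t p q (tens (Mm a b) (Mm b a))" for a b
  define Y where "Y a b = wd [Xm p a b, Xvee p a b]" for a b
  define \<kappa> where "\<kappa> = xi_coeff p q"
  have "Xi p q = (\<Sum>(a, b)\<in>upper_pairs N. fscale (\<kappa> a b) (T a b) + fscale (\<kappa> a b) (T b a))
      + (\<Sum>a\<in>N. fscale (\<kappa> a a) (T a a))"
    unfolding Xi_expansion by (simp add: sum_square_split N_def T_def \<kappa>_def xi_coeff_commute)
  moreover have "Omega_op p - Omega_oq p q - fscale ((of_nat p - of_nat q) / (of_nat p + of_nat q)) (Omega_g p q)
      = (\<Sum>(a, b)\<in>upper_pairs N. fscale (2 * \<kappa> a b) (Y a b))"
    unfolding Omega_combination by (simp add: N_def Y_def \<kappa>_def)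
  ultimately have "Xi p q - (Omega_op p - Omega_oq p q
        - fscale ((of_nat p - of_nat q) / (of_nat p + of_nat q)) (Omega_g p q))
      = (\<Sum>(a, b)\<in>upper_pairs N. fscale (\<kappa> a b) (T a b) + fscale (\<kappa> a b) (T b a)
          - fscale (2 * \<kappa> a b) (Y a b))
        + (\<Sum>a\<in>N. fscale (\<kappa> a a) (T a a))"
    by (simp add: sum_subtractf split_def)
  also have "\<dots> \<in> uideal (p+q) (gpq p q)"
    unfolding N_def T_def Y_def
    by (intro uideal.add uideal_sum uideal.scale)
       (auto simp: upper_pairs_def intro: tens_Mm_sym_congruent tens_Mm_diag_in_uideal)
  finally show ?thesis
    unfolding ueq_def gamma2_def .
qed

end
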